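(* Let $\mathbb X$ be a flow space and $x_\bullet\in\mathbb X$. If $\mathbb X$ is not dense at $x_\bullet$, then $\mathbb X$ does not admit an expansion about $x_\bullet$.
   Context: A flow space is a compact metrizable space $\mathbb X$ of topological dimension one with a continuous action $(t,x)\mapsto t.x$ of $\mathbb R$ without fixed points; orbits are oriented by increasing $t$. $\mathbb X$ is dense at $x\in\mathbb X$ if every neighbourhood of $x$ contains a point of the forward orbit $\{t.y:t>0\}$ of every $y\in\mathbb X$. $W_k$ is a wedge of $k$ circles with a chosen orientation on each circle. A positive map $f\colon W_m\to W_k$ is a continuous surjection sending wedge point to wedge point, preserving the orientation of each circle, and locally injective at every point other than the wedge point. A projection $p\colon\mathbb X\to W_k$ is a continuous surjection which is locally injective along orbits (each $x$ has $\epsilon_x>0$ with $p$ injective on $\{t.x:|t|<\epsilon_x\}$) and orientation preserving along orbits. An expansion of $\mathbb X$ about $x_\bullet$ consists of oriented wedges of circles $X_i$ ($i\ge1$) with wedge points $x_i$, positive maps $f_i\colon X_{i+1}\to X_i$, and projections $p_i\colon\mathbb X\to X_i$ with $p_i(x_\bullet)=x_i$, such that $p_n=f_{n,m}\circ p_m$ for all $m>n$, where $f_{n,m}=f_n\circ f_{n+1}\circ\cdots\circ f_{m-1}\colon X_m\to X_n$, and such that $x\mapsto(p_i(x))_{i\ge1}$ is a homeomorphism from $\mathbb X$ onto the inverse limit $\{(z_i)\in\prod_i X_i : z_i=f_i(z_{i+1})\ \forall i\}$. *)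

theory Defs
  imports "HOL-Analysis.Analysis"
begin

definition covering_dim_le :: "'a topology \<Rightarrow> nat \<Rightarrow> bool" where
  "covering_dim_le X n \<longleftrightarrow>
     (\<forall>\<U>. finite \<U> \<and> (\<forall>U\<in>\<U>. openin X U) \<and> \<Union>\<U> = topspace X \<longrightarrow>
        (\<exists>\<V>. finite \<V> \<and> (\<forall>V\<in>\<V>. openin X V) \<and> \<Union>\<V> = topspace X \<and>
              (\<forall>V\<in>\<V>. \<exists>U\<in>\<U>. V \<subseteq> U) \<and>
              (\<forall>x\<in>topspace X. card {V\<in>\<V>. x \<in> V} \<le> n + 1)))"

definition topological_dimension_one :: "'a topology \<Rightarrow> bool" where
  "topological_dimension_one X \<longleftrightarrow> covering_dim_le X 1 \<and> \<not> covering_dim_le X 0"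

definition flow_space :: "'a topology \<Rightarrow> (real \<Rightarrow> 'a \<Rightarrow> 'a) \<Rightarrow> bool" where
  "flow_space X \<phi> \<longleftrightarrow>
     compact_space X \<and> metrizable_space X \<and> topological_dimension_one X \<and>
     continuous_map (prod_topology euclideanreal X) X (\<lambda>(t, x). \<phi> t x) \<and>
     (\<forall>x\<in>topspace X. \<phi> 0 x = x) \<and>
     (\<forall>s t. \<forall>x\<in>topspace X. \<phi> (s + t) x = \<phi> s (\<phi> t x)) \<and>
     (\<forall>x\<in>topspace X. \<exists>t. \<phi> t x \<noteq> x)"

definition dense_at :: "'a topology \<Rightarrow> (real \<Rightarrow> 'a \<Rightarrow> 'a) \<Rightarrow> 'a \<Rightarrow> bool" where
  "dense_at X \<phi> x \<longleftrightarrow>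
     (\<forall>U. openin X U \<and> x \<in> U \<longrightarrow> (\<forall>y\<in>topspace X. \<exists>t>0. \<phi> t y \<in> U))"

text \<open>Circle j (j < k) is the circle of radius j+1 centred at j+1, parametrised
  by t mod 1, all circles touch only at the wedge point 0; the orientation of each
  circle is that of increasing t.\<close>

definition wedge_pt :: "nat \<Rightarrow> real \<Rightarrow> complex" where
  "wedge_pt j t = of_nat (Suc j) * (1 - cis (2 * pi * t))"

definition wedge :: "nat \<Rightarrow> complex set" where
  "wedge k = {wedge_pt j t | j t. j < k}"

definition wedge_top :: "nat \<Rightarrow> complex topology" where
  "wedge_top k = subtopology euclidean (wedge k)"

definition pos_path :: "real set \<Rightarrow> (real \<Rightarrow> complex) \<Rightarrow> bool" where
  "pos_path I \<gamma> \<longleftrightarrow>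
     (\<forall>u v j a b. u < v \<and> {u..v} \<subseteq> I \<and> \<gamma> ` {u..v} \<subseteq> wedge_pt j ` {0<..<1} \<and>
        0 < a \<and> a < 1 \<and> 0 < b \<and> b < 1 \<and> \<gamma> u = wedge_pt j a \<and> \<gamma> v = wedge_pt j b
        \<longrightarrow> a < b)"

definition positive_map :: "nat \<Rightarrow> nat \<Rightarrow> (complex \<Rightarrow> complex) \<Rightarrow> bool" where
  "positive_map m k f \<longleftrightarrow>
     continuous_map (wedge_top m) (wedge_top k) f \<and>
     f ` wedge m = wedge k \<and>
     f 0 = 0 \<and>
     (\<forall>j<m. pos_path {0<..<1} (\<lambda>t. f (wedge_pt j t))) \<and>
     (\<forall>z\<in>wedge m - {0}. \<exists>U. openin (wedge_top m) U \<and> z \<in> U \<and> inj_on f U)"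

definition projection :: "'a topology \<Rightarrow> (real \<Rightarrow> 'a \<Rightarrow> 'a) \<Rightarrow> nat \<Rightarrow> ('a \<Rightarrow> complex) \<Rightarrow> bool" where
  "projection X \<phi> k p \<longleftrightarrow>
     continuous_map X (wedge_top k) p \<and>
     p ` topspace X = wedge k \<and>
     (\<forall>x\<in>topspace X. \<exists>\<epsilon>>0. inj_on (\<lambda>t. p (\<phi> t x)) {-\<epsilon><..<\<epsilon>} \<and>
                            pos_path {-\<epsilon><..<\<epsilon>} (\<lambda>t. p (\<phi> t x)))"

definition bond_comp :: "(nat \<Rightarrow> complex \<Rightarrow> complex) \<Rightarrow> nat \<Rightarrow> nat \<Rightarrow> complex \<Rightarrow> complex" where
  "bond_comp f n m = foldr (\<lambda>i g. f i \<circ> g) [n..<m] id"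

definition inv_lim :: "(nat \<Rightarrow> nat) \<Rightarrow> (nat \<Rightarrow> complex \<Rightarrow> complex) \<Rightarrow> (nat \<Rightarrow> complex) set" where
  "inv_lim k f = {z. (\<forall>i. z i \<in> wedge (k i)) \<and> (\<forall>i. z i = f i (z (Suc i)))}"

definition inv_lim_top :: "(nat \<Rightarrow> nat) \<Rightarrow> (nat \<Rightarrow> complex \<Rightarrow> complex) \<Rightarrow> (nat \<Rightarrow> complex) topology" where
  "inv_lim_top k f = subtopology (product_topology (\<lambda>i. wedge_top (k i)) UNIV) (inv_lim k f)"

definition has_expansion :: "'a topology \<Rightarrow> (real \<Rightarrow> 'a \<Rightarrow> 'a) \<Rightarrow> 'a \<Rightarrow> bool" where
  "has_expansion X \<phi> x0 \<longleftrightarrow>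
     (\<exists>(k :: nat \<Rightarrow> nat) (f :: nat \<Rightarrow> complex \<Rightarrow> complex) (p :: nat \<Rightarrow> 'a \<Rightarrow> complex).
        (\<forall>i. positive_map (k (Suc i)) (k i) (f i)) \<and>
        (\<forall>i. projection X \<phi> (k i) (p i)) \<and>
        (\<forall>i. p i x0 = 0) \<and>
        (\<forall>n m. n < m \<longrightarrow> (\<forall>x\<in>topspace X. p n x = bond_comp f n m (p m x))) \<and>
        homeomorphic_map X (inv_lim_top k f) (\<lambda>x i. p i x))"

end

theory Submission
  imports Defs
begin

text \<open>Let U be a neighbourhood of x0 missed by the forward orbit of y. Since the coordinates
  of a point of the inverse limit are determined by any later one, U contains every point
  whose m-th coordinate is the wedge point, for some m. It therefore suffices that every
  forward orbit meets the fibre of p_m over the wedge point. If it did not, p_m would map the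
  forward orbit into a single open arc of one circle, moving monotonically along it, hence
  converging; an omega-limit point of the orbit would then have p_m constant along its own
  orbit, contradicting local injectivity of p_m along orbits.\<close>

text \<open>The circle j of the wedge has centre and radius R = j + 1, so its points satisfy
  |z|^2 = 2 R Re z; the quotient below recovers the diameter 2R and thus identifies the circle.\<close>

definition circle_diameter :: "complex \<Rightarrow> real" where
  "circle_diameter z = (cmod z)\<^sup>2 / Re z"

lemma norm_wedge_pt_squared: "(cmod (wedge_pt j t))\<^sup>2 = 2 * real (Suc j) * Re (wedge_pt j t)"
proof -
  have "(cmod (wedge_pt j t))\<^sup>2 = (real (Suc j))\<^sup>2 * (cmod (1 - cis (2 * pi * t)))\<^sup>2"
    unfolding wedge_pt_def norm_mult power_mult_distrib by (simp only: norm_of_nat)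
  also have "\<dots> = (real (Suc j))\<^sup>2 * (2 * (1 - cos (2 * pi * t)))"
    by (simp add: cmod_power2 power2_diff sin_squared_eq algebra_simps)
  also have "\<dots> = 2 * real (Suc j) * (real (Suc j) * (1 - cos (2 * pi * t)))"
    by (simp only: power2_eq_square mult_ac)
  also have "real (Suc j) * (1 - cos (2 * pi * t)) = Re (wedge_pt j t)"
    by (simp add: wedge_pt_def del: of_nat_Suc)
  finally show ?thesis .
qed

lemma Re_wedge_pt_pos:
  assumes "wedge_pt j t \<noteq> 0"
  shows "Re (wedge_pt j t) > 0"
proof -
  have "0 < (cmod (wedge_pt j t))\<^sup>2" using assms by simp
  then show ?thesis
    unfolding norm_wedge_pt_squared by (simp add: zero_less_mult_iff)
qed

lemma circle_diameter_wedge_pt: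
  "wedge_pt j t \<noteq> 0 \<Longrightarrow> circle_diameter (wedge_pt j t) = 2 * real (Suc j)"
  using Re_wedge_pt_pos[of j t] by (simp add: circle_diameter_def norm_wedge_pt_squared)

lemma wedge_pt_frac: "wedge_pt j (frac t) = wedge_pt j t"
proof -
  have "cis (2 * pi * t) = cis (2 * pi * of_int \<lfloor>t\<rfloor>) * cis (2 * pi * frac t)"
    by (simp add: cis_mult frac_def algebra_simps)
  then show ?thesis by (simp add: wedge_pt_def)
qed

lemma wedge_nonzero_in_open_arc:
  assumes "z \<in> wedge k" "z \<noteq> 0"
  obtains j where "j < k" "z \<in> wedge_pt j ` {0<..<1}"
proof -
  obtain j t where jt: "j < k" "z = wedge_pt j t"
    using assms(1) by (auto simp: wedge_def)
  have "frac t \<noteq> 0"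
    using jt(2) assms(2) wedge_pt_frac[of j t] by (auto simp: wedge_pt_def)
  then have "frac t \<in> {0<..<1}"
    using frac_ge_0[of t] frac_lt_1[of t] by auto
  with jt that show ?thesis
    using wedge_pt_frac by (metis image_eqI)
qed

lemma connected_in_wedge_open_arc:
  assumes "connected S" "S \<noteq> {}" "S \<subseteq> wedge k - {0}"
  obtains j where "j < k" "S \<subseteq> wedge_pt j ` {0<..<1}"
proof -
  have index: "\<exists>j<k. z \<in> wedge_pt j ` {0<..<1} \<and> circle_diameter z = 2 * real (Suc j)"
    if z: "z \<in> S" for z
  proof -
    obtain j where "j < k" "z \<in> wedge_pt j ` {0<..<1}"
      using wedge_nonzero_in_open_arc[of z k] z assms(3) by blast
    moreover have "z \<noteq> 0" using z assms(3) by blast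
    ultimately show ?thesis
      using circle_diameter_wedge_pt by blast
  qed
  have "Re z \<noteq> 0" if "z \<in> S" for z
    using index[OF that] that assms(3) Re_wedge_pt_pos by fastforce
  then have "continuous_on S circle_diameter"
    unfolding circle_diameter_def by (intro continuous_intros) auto
  moreover have "finite (circle_diameter ` S)"
    by (rule finite_subset[of _ "(\<lambda>j. 2 * real (Suc j)) ` {..<k}"]) (auto dest: index)
  ultimately have const: "circle_diameter constant_on S"
    by (rule continuous_finite_range_constant[OF assms(1)])
  obtain z0 where "z0 \<in> S" using assms(2) by blast
  then obtain j where j: "j < k" "circle_diameter z0 = 2 * real (Suc j)"
    using index by blast
  have "S \<subseteq> wedge_pt j ` {0<..<1}"
  proof
    fix z assume "z \<in> S"
    then obtain i where "z \<in> wedge_pt i ` {0<..<1}" "circle_diameter z = 2 * real (Suc i)"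
      using index by blast
    moreover have "circle_diameter z = circle_diameter z0"
      using const \<open>z \<in> S\<close> \<open>z0 \<in> S\<close> by (auto simp: constant_on_def)
    ultimately show "z \<in> wedge_pt j ` {0<..<1}" using j by simp
  qed
  with j(1) that show ?thesis by blast
qed

lemma locally_strict_mono_imp_strict_mono_on:
  fixes a :: "real \<Rightarrow> real"
  assumes loc: "\<And>t. c < t \<Longrightarrow> \<exists>e>0. \<forall>u v. t - e < u \<longrightarrow> u < v \<longrightarrow> v < t + e \<longrightarrow> a u < a v"
  shows "strict_mono_on {c<..} a"
proof (rule strict_mono_onI)
  fix u v assume "u \<in> {c<..}" "v \<in> {c<..}" "u < v"
  then have u: "c < u" and uv: "u < v" by auto
  define S where "S = {w. u \<le> w \<and> w \<le> v \<and> (\<forall>x. u < x \<and> x \<le> w \<longrightarrow> a u < a x)}"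
  define s where "s = Sup S"
  have "u \<in> S" using uv by (simp add: S_def)
  have bdd: "bdd_above S" by (auto simp: S_def intro: bdd_aboveI[of _ v])
  have us: "u \<le> s" unfolding s_def using \<open>u \<in> S\<close> bdd by (rule cSup_upper)
  have below_s: "a u < a x" if "u < x" "x < s" for x
  proof -
    obtain w where "w \<in> S" "x < w"
      using \<open>x < s\<close> less_cSup_iff[OF _ bdd] \<open>u \<in> S\<close> unfolding s_def by blast
    with that show ?thesis by (auto simp: S_def)
  qed
  obtain e where e: "e > 0" "\<forall>x y. s - e < x \<longrightarrow> x < y \<longrightarrow> y < s + e \<longrightarrow> a x < a y"
    using loc[of s] u us by auto
  define w where "w = min v (s + e / 2)"
  have "w \<in> S"
    unfolding S_def
  proof (intro CollectI conjI allI impI)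
    fix x assume x: "u < x \<and> x \<le> w"
    show "a u < a x"
    proof (cases "x < s")
      case True then show ?thesis using below_s x by blast
    next
      case False
      show ?thesis
      proof (cases "s = u")
        case True then show ?thesis using e x by (auto simp: w_def)
      next
        case False
        define x0 where "x0 = (max u (s - e) + s) / 2"
        have x0: "u < x0" "x0 < s" "s - e < x0" using False us e(1) by (auto simp: x0_def)
        then have "a u < a x0" using below_s by blast
        also have "a x0 < a x" using e(2) x0 x \<open>\<not> x < s\<close> by (auto simp: w_def)
        finally show ?thesis .
      qed
    qed
  qed (use uv us e(1) in \<open>auto simp: w_def\<close>)
  then have "w \<le> s" unfolding s_def using bdd by (rule cSup_upper)
  then have "w = v" using e(1) by (auto simp: w_def)
  then show "a u < a v" using \<open>w \<in> S\<close> uv by (auto simp: S_def)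
qed

lemma strict_mono_on_bounded_tendsto:
  fixes a :: "real \<Rightarrow> real"
  assumes mono: "strict_mono_on {c<..} a" and bdd: "bdd_above (a ` {c<..})"
  shows "(a \<longlongrightarrow> Sup (a ` {c<..})) at_top"
proof (rule order_tendstoI)
  let ?L = "Sup (a ` {c<..})"
  show "\<forall>\<^sub>F t in at_top. a t < y" if "?L < y" for y
    using eventually_gt_at_top[of c]
    by eventually_elim (use that bdd in \<open>auto intro: le_less_trans[OF cSup_upper]\<close>)
  show "\<forall>\<^sub>F t in at_top. y < a t" if y: "y < ?L" for y
  proof -
    have "a ` {c<..} \<noteq> {}" by simp
    then obtain T where T: "c < T" "y < a T"
      using y less_cSup_iff[OF _ bdd] by auto
    show ?thesis
      using eventually_ge_at_top[of T]
    proof eventually_elim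
      case (elim t)
      with T strict_mono_onD[OF mono, of T t] show ?case
        by (cases "t = T") auto
    qed
  qed
qed

lemma flow_space_continuous_map_orbit:
  assumes "flow_space X \<phi>" "x \<in> topspace X"
  shows "continuous_map euclideanreal X (\<lambda>t. \<phi> t x)"
proof -
  have "continuous_map euclideanreal (prod_topology euclideanreal X) (\<lambda>t. (t, x))"
    using assms(2) by (intro continuous_intros) auto
  moreover have "continuous_map (prod_topology euclideanreal X) X (\<lambda>(t, x). \<phi> t x)"
    using assms(1) by (simp add: flow_space_def)
  ultimately show ?thesis
    using continuous_map_compose by (fastforce simp: o_def)
qed

lemma flow_space_continuous_map_time:
  assumes "flow_space X \<phi>"
  shows "continuous_map X X (\<phi> s)"
proof -
  have "continuous_map X (prod_topology euclideanreal X) (\<lambda>x. (s, x))"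
    by (intro continuous_intros) auto
  moreover have "continuous_map (prod_topology euclideanreal X) X (\<lambda>(t, x). \<phi> t x)"
    using assms by (simp add: flow_space_def)
  ultimately show ?thesis
    using continuous_map_compose by (fastforce simp: o_def)
qed

lemma flow_space_in_topspace:
  "flow_space X \<phi> \<Longrightarrow> x \<in> topspace X \<Longrightarrow> \<phi> t x \<in> topspace X"
  using flow_space_continuous_map_time[of X \<phi> t] unfolding continuous_map_def by blast

lemma flow_space_add:
  "flow_space X \<phi> \<Longrightarrow> x \<in> topspace X \<Longrightarrow> \<phi> s (\<phi> t x) = \<phi> (s + t) x"
  by (simp add: flow_space_def)

lemma projection_continuous_map: "projection X \<phi> k p \<Longrightarrow> continuous_map X euclidean p"
  unfolding projection_def wedge_top_def by (meson continuous_map_into_fulltopology)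

lemma projection_in_wedge: "projection X \<phi> k p \<Longrightarrow> x \<in> topspace X \<Longrightarrow> p x \<in> wedge k"
  unfolding projection_def by blast

lemma flow_space_orbit_tendsto_imp_constant_orbit:
  fixes p :: "'a \<Rightarrow> 'b::t2_space"
  assumes fs: "flow_space X \<phi>" and p: "continuous_map X euclidean p"
    and y: "y \<in> topspace X" and lim: "((\<lambda>t. p (\<phi> t y)) \<longlongrightarrow> c) at_top"
  obtains w where "w \<in> topspace X" "\<And>s. p (\<phi> s w) = c"
proof -
  obtain M d where Md: "Metric_space M d" "X = Metric_space.mtopology M d"
    using fs unfolding flow_space_def metrizable_space_def by blast
  have compact: "compact_space (Metric_space.mtopology M d)"
    using fs Md unfolding flow_space_def by simp
  have M: "topspace X = M"
    using Md Metric_space.topspace_mtopology by metis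
  have "range (\<lambda>n. \<phi> (real n) y) \<subseteq> M"
    using flow_space_in_topspace[OF fs y] M by auto
  then obtain w r where w: "w \<in> topspace X" "strict_mono r"
    and conv: "limitin X ((\<lambda>n. \<phi> (real n) y) \<circ> r) w sequentially"
    using compact Metric_space.compact_space_sequentially[OF Md(1)] Md(2) M by metis
  have "p (\<phi> s w) = c" for s
  proof (rule LIMSEQ_unique)
    have "limitin X (\<phi> s \<circ> ((\<lambda>n. \<phi> (real n) y) \<circ> r)) (\<phi> s w) sequentially"
      by (rule continuous_map_limit[OF flow_space_continuous_map_time[OF fs] conv])
    from continuous_map_limit[OF p this]
    show "(\<lambda>n. p (\<phi> (s + real (r n)) y)) \<longlonglongrightarrow> p (\<phi> s w)"
      by (simp add: o_def flow_space_add[OF fs y])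
    have "filterlim (\<lambda>n. real (r n)) at_top sequentially"
      using filterlim_compose[OF filterlim_real_sequentially filterlim_subseq[OF w(2)]] .
    then have "filterlim (\<lambda>n. s + real (r n)) at_top sequentially"
      by (rule filterlim_tendsto_add_at_top[OF tendsto_const])
    with lim show "(\<lambda>n. p (\<phi> (s + real (r n)) y)) \<longlonglongrightarrow> c"
      by (rule filterlim_compose)
  qed
  with w(1) that show ?thesis by blast
qed

lemma projection_orbit_not_tendsto:
  assumes fs: "flow_space X \<phi>" and p: "projection X \<phi> k p" and y: "y \<in> topspace X"
  shows "\<not> ((\<lambda>t. p (\<phi> t y)) \<longlongrightarrow> c) at_top"
proof
  assume "((\<lambda>t. p (\<phi> t y)) \<longlongrightarrow> c) at_top"
  then obtain w where w: "w \<in> topspace X" "\<And>s. p (\<phi> s w) = c"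
    using flow_space_orbit_tendsto_imp_constant_orbit[OF fs projection_continuous_map[OF p] y]
    by blast
  obtain e where "e > 0" "inj_on (\<lambda>t. p (\<phi> t w)) {-e<..<e}"
    using p w(1) unfolding projection_def by blast
  then have "(0::real) = e / 2"
    by (intro inj_onD[where f = "\<lambda>t. p (\<phi> t w)"]) (auto simp: w(2))
  with \<open>e > 0\<close> show False by simp
qed

lemma projection_arc_parameter_locally_increasing:
  assumes fs: "flow_space X \<phi>" and p: "projection X \<phi> k p" and y: "y \<in> topspace X"
    and arc: "\<And>s. 0 < s \<Longrightarrow> a s \<in> {0<..<1} \<and> p (\<phi> s y) = wedge_pt j (a s)"
    and t: "0 < t"
  shows "\<exists>e>0. \<forall>u v. t - e < u \<longrightarrow> u < v \<longrightarrow> v < t + e \<longrightarrow> a u < a v"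
proof -
  obtain e where e: "e > 0" "pos_path {-e<..<e} (\<lambda>s. p (\<phi> s (\<phi> t y)))"
    using p flow_space_in_topspace[OF fs y] unfolding projection_def by blast
  have shift: "p (\<phi> s (\<phi> t y)) = p (\<phi> (s + t) y)" for s
    by (simp add: flow_space_add[OF fs y])
  show ?thesis
  proof (intro exI[of _ "min e t"] conjI allI impI)
    fix u v assume uv: "t - min e t < u" "u < v" "v < t + min e t"
    have "(\<lambda>s. p (\<phi> s (\<phi> t y))) ` {u - t..v - t} \<subseteq> wedge_pt j ` {0<..<1}"
    proof (rule image_subsetI)
      fix s assume "s \<in> {u - t..v - t}"
      then have "0 < s + t" using uv by auto
      then show "p (\<phi> s (\<phi> t y)) \<in> wedge_pt j ` {0<..<1}"
        using arc[of "s + t"] by (simp add: shift)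
    qed
    moreover have "{u - t..v - t} \<subseteq> {-e<..<e}" using uv by auto
    moreover have "p (\<phi> (u - t) (\<phi> t y)) = wedge_pt j (a u)"
      and "p (\<phi> (v - t) (\<phi> t y)) = wedge_pt j (a v)"
      using uv arc[of u] arc[of v] by (auto simp: shift)
    moreover have "a u \<in> {0<..<1}" "a v \<in> {0<..<1}"
      using uv arc[of u] arc[of v] by auto
    ultimately show "a u < a v"
      using e(2)[unfolded pos_path_def, rule_format, of "u - t" "v - t" j "a u" "a v"] uv
      by auto
  qed (use e t in auto)
qed

lemma projection_orbit_meets_wedge_point:
  assumes fs: "flow_space X \<phi>" and p: "projection X \<phi> k p" and y: "y \<in> topspace X"
  shows "\<exists>t>0. p (\<phi> t y) = 0"
proof (rule ccontr)
  assume no_hit: "\<not> ?thesis"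
  define g where "g t = p (\<phi> t y)" for t
  have "continuous_on UNIV g"
    using continuous_map_compose[OF flow_space_continuous_map_orbit[OF fs y]
        projection_continuous_map[OF p]]
    by (simp add: g_def o_def)
  then have "connected (g ` {0<..})"
    by (intro connected_continuous_image) (auto intro: continuous_on_subset)
  moreover have "g ` {0<..} \<subseteq> wedge k - {0}"
    using no_hit projection_in_wedge[OF p flow_space_in_topspace[OF fs y]]
    by (auto simp: g_def)
  moreover have "g ` {0<..} \<noteq> {}" by simp
  ultimately obtain j where "g ` {0<..} \<subseteq> wedge_pt j ` {0<..<1}"
    using connected_in_wedge_open_arc by metis
  then have "\<forall>t\<in>{0<..}. \<exists>u\<in>{0<..<1}. g t = wedge_pt j u" by blast
  then obtain a where "\<forall>t\<in>{0<..}. a t \<in> {0<..<1} \<and> g t = wedge_pt j (a t)"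
    by (metis bchoice)
  then have arc: "\<And>t. 0 < t \<Longrightarrow> a t \<in> {0<..<1} \<and> g t = wedge_pt j (a t)" by simp
  have "strict_mono_on {0<..} a"
    using projection_arc_parameter_locally_increasing[OF fs p y arc[unfolded g_def]]
    by (rule locally_strict_mono_imp_strict_mono_on)
  moreover have "bdd_above (a ` {0<..})"
    using arc by (auto intro!: bdd_aboveI[of _ 1] less_imp_le)
  ultimately have "(a \<longlongrightarrow> Sup (a ` {0<..})) at_top"
    by (rule strict_mono_on_bounded_tendsto)
  then have "((\<lambda>t. wedge_pt j (a t)) \<longlongrightarrow> wedge_pt j (Sup (a ` {0<..}))) at_top"
    unfolding wedge_pt_def by (intro tendsto_intros)
  moreover have "\<forall>\<^sub>F t in at_top. wedge_pt j (a t) = g t"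
    using eventually_gt_at_top[of 0] by eventually_elim (simp add: arc)
  ultimately have "(g \<longlongrightarrow> wedge_pt j (Sup (a ` {0<..}))) at_top"
    by (rule Lim_transform_eventually)
  with projection_orbit_not_tendsto[OF fs p y] show False
    unfolding g_def by blast
qed

lemma inv_lim_eq_below:
  assumes "z \<in> inv_lim k f" "z' \<in> inv_lim k f" "z' m = z m" "i \<le> m"
  shows "z' i = z i"
  using \<open>i \<le> m\<close>
proof (induction rule: inc_induct)
  case base
  show ?case by (fact assms(3))
next
  case (step i)
  have "z' i = f i (z' (Suc i))" "z i = f i (z (Suc i))"
    using assms(1,2) unfolding inv_lim_def by blast+
  with step.IH show ?case by simp
qed

lemma openin_inv_lim_top_coordinate_neighbourhood:
  assumes "openin (inv_lim_top k f) W" "z \<in> W"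
  obtains m where "\<And>z'. z' \<in> inv_lim k f \<Longrightarrow> z' m = z m \<Longrightarrow> z' \<in> W"
proof -
  obtain T where T: "openin (product_topology (\<lambda>i. wedge_top (k i)) UNIV) T"
    and W: "W = T \<inter> inv_lim k f"
    using assms(1) unfolding inv_lim_top_def openin_subtopology by blast
  moreover have "z \<in> T" using assms(2) W by blast
  ultimately obtain V where V: "finite {i. V i \<noteq> topspace (wedge_top (k i))}"
    "z \<in> PiE UNIV V" "PiE UNIV V \<subseteq> T"
    unfolding openin_product_topology_alt by auto
  define m where "m = Max (insert 0 {i. V i \<noteq> topspace (wedge_top (k i))})"
  have "z' \<in> W" if z': "z' \<in> inv_lim k f" "z' m = z m" for z'
  proof -
    have "z' i \<in> V i" for i
    proof (cases "V i = topspace (wedge_top (k i))")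
      case True
      have "z' i \<in> wedge (k i)" using z'(1) unfolding inv_lim_def by blast
      with True show ?thesis by (simp add: wedge_top_def)
    next
      case False
      with V(1) have "i \<le> m" by (simp add: m_def)
      moreover have "z \<in> inv_lim k f" using assms(2) W by blast
      ultimately have "z' i = z i" using z' inv_lim_eq_below by blast
      with V(2) show ?thesis by auto
    qed
    with V(3) z'(1) W show ?thesis by (auto simp: PiE_iff)
  qed
  with that show ?thesis by blast
qed

theorem proposition3p2:
  fixes X :: "'a topology" and \<phi> :: "real \<Rightarrow> 'a \<Rightarrow> 'a" and x0 :: 'a
  assumes "flow_space X \<phi>" and "x0 \<in> topspace X" and "\<not> dense_at X \<phi> x0"
  shows "\<not> has_expansion X \<phi> x0"
proof
  assume "has_expansion X \<phi> x0"
  then obtain k f p where proj: "\<And>i. projection X \<phi> (k i) (p i)" and p0: "\<And>i. p i x0 = 0"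
    and hom: "homeomorphic_map X (inv_lim_top k f) (\<lambda>x i. p i x)"
    unfolding has_expansion_def by blast
  from assms(3) obtain U y where U: "openin X U" "x0 \<in> U" and y: "y \<in> topspace X"
    and avoid: "\<And>t. t > 0 \<Longrightarrow> \<phi> t y \<notin> U"
    unfolding dense_at_def by blast
  have "openin (inv_lim_top k f) ((\<lambda>x i. p i x) ` U)"
    using homeomorphic_map_openness[OF hom openin_subset[OF U(1)]] U(1) by simp
  then obtain m where nhd: "\<And>z. z \<in> inv_lim k f \<Longrightarrow> z m = p m x0 \<Longrightarrow> z \<in> (\<lambda>x i. p i x) ` U"
    using openin_inv_lim_top_coordinate_neighbourhood U(2) by blast
  obtain t where t: "t > 0" "p m (\<phi> t y) = 0"
    using projection_orbit_meets_wedge_point[OF assms(1) proj y] by blast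
  have yt: "\<phi> t y \<in> topspace X"
    using flow_space_in_topspace[OF assms(1) y] .
  then have "(\<lambda>i. p i (\<phi> t y)) \<in> inv_lim k f"
    using homeomorphic_imp_continuous_map[OF hom]
    unfolding continuous_map_def inv_lim_top_def by auto
  then have "(\<lambda>i. p i (\<phi> t y)) \<in> (\<lambda>x i. p i x) ` U"
    using nhd t(2) p0 by simp
  then obtain u where u: "u \<in> U" "(\<lambda>i. p i u) = (\<lambda>i. p i (\<phi> t y))"
    by auto
  have "u = \<phi> t y"
    using inj_onD[OF homeomorphic_imp_injective_map[OF hom] u(2)] u(1) openin_subset[OF U(1)] yt
    by blast
  with u(1) avoid t(1) show False by blast
qed

end
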